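(* Let $\sigma : X^* \to M$ be a monoid choice of generators for a monoid $M$ and suppose $w \in L_\sigma(M)$. Then $w$ labels a loop (a path from a vertex to itself) at every vertex of the loop automaton of $M$ with respect to $\sigma$. Correspondingly, if $\sigma : X^+ \to S$ is a semigroup choice of generators for a semigroup $S$ and $w \in L_\sigma(S)$, then $w$ labels a loop at every vertex of the loop automaton of $S$ with respect to $\sigma$.
   Context: Maps are written on the right. $X^*$, $X^+$: free monoid and free semigroup on $X$. Let $\overline{X} = \{\overline{x} : x \in X\}$ be new symbols, $\hat{X} = X \cup \overline{X}$. For a monoid $M$ and surjective monoid morphism $\sigma : X^* \to M$, the loop automaton has vertex set $M$, for each $a \in M$, $x \in X$ an edge $a \to a(x\sigma)$ labelled $x$ and an edge $a(x\sigma) \to a$ labelled $\overline{x}$; the loop problem $L_\sigma(M)$ is the set of labels of paths from the identity to the identity. For a semigroup $S$ and surjective morphism $\sigma : X^+ \to S$, the loop automaton and loop problem of $S$ are those of $S^1$ ($S$ with a new identity adjoined, even if one exists) with respect to the unique extension $\sigma^1 : X^* \to S^1$. *)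

theory Defs
  imports Main
begin

text \<open>Letters of the doubled alphabet: Pos x is x, Neg x is the barred letter.\<close>
datatype 'x letter = Pos 'x | Neg 'x

text \<open>Paths in the loop automaton of a monoid whose multiplication is mul, with
  generator images gen (gen x = x sigma). Vertex set = all elements of the type.
  Edge a -> mul a (gen x) labelled Pos x, and edge mul a (gen x) -> a labelled Neg x.
  lpath mul gen a w b: w labels a path from a to b.\<close>
fun lpath :: "('a \<Rightarrow> 'a \<Rightarrow> 'a) \<Rightarrow> ('x \<Rightarrow> 'a) \<Rightarrow> 'a \<Rightarrow> 'x letter list \<Rightarrow> 'a \<Rightarrow> bool" where
  "lpath mul gen a [] b = (a = b)"
| "lpath mul gen a (Pos x # w) b = lpath mul gen (mul a (gen x)) w b"
| "lpath mul gen a (Neg x # w) b = (\<exists>c. mul c (gen x) = a \<and> lpath mul gen c w b)"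

definition loop_problem :: "('a \<Rightarrow> 'a \<Rightarrow> 'a) \<Rightarrow> 'a \<Rightarrow> ('x \<Rightarrow> 'a) \<Rightarrow> 'x letter list set" where
  "loop_problem mul e gen = {w. lpath mul gen e w e}"

definition monoid_choice :: "('x list \<Rightarrow> 'm::monoid_mult) \<Rightarrow> bool" where
  "monoid_choice \<sigma> \<longleftrightarrow> \<sigma> [] = 1 \<and> (\<forall>u v. \<sigma> (u @ v) = \<sigma> u * \<sigma> v) \<and> surj \<sigma>"

definition loop_problem_monoid :: "('x list \<Rightarrow> 'm::monoid_mult) \<Rightarrow> 'x letter list set" where
  "loop_problem_monoid \<sigma> = loop_problem (*) 1 (\<lambda>x. \<sigma> [x])"

text \<open>Semigroup choice of generators: surjective semigroup morphism from X+ (nonempty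
  lists; the value at [] is irrelevant) onto S.\<close>
definition semigroup_choice :: "('x list \<Rightarrow> 's::semigroup_mult) \<Rightarrow> bool" where
  "semigroup_choice \<sigma> \<longleftrightarrow>
     (\<forall>u v. u \<noteq> [] \<longrightarrow> v \<noteq> [] \<longrightarrow> \<sigma> (u @ v) = \<sigma> u * \<sigma> v) \<and> \<sigma> ` {w. w \<noteq> []} = UNIV"

text \<open>S^1: S with a new identity None adjoined.\<close>
fun mult1 :: "'s::semigroup_mult option \<Rightarrow> 's option \<Rightarrow> 's option" where
  "mult1 None b = b"
| "mult1 (Some a) None = Some a"
| "mult1 (Some a) (Some b) = Some (a * b)"

definition sigma1 :: "('x list \<Rightarrow> 's::semigroup_mult) \<Rightarrow> 'x list \<Rightarrow> 's option" where
  "sigma1 \<sigma> w = (if w = [] then None else Some (\<sigma> w))"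

definition loop_problem_semigroup :: "('x list \<Rightarrow> 's::semigroup_mult) \<Rightarrow> 'x letter list set" where
  "loop_problem_semigroup \<sigma> = loop_problem mult1 None (\<lambda>x. sigma1 \<sigma> [x])"

end

theory Submission
  imports Defs
begin

text \<open>Edges of the loop automaton are given by right multiplication, so by associativity
  left multiplication by a is an endomorphism of the automaton; it carries a loop at the
  identity to a loop at a.\<close>

lemma lpath_mul_left:
  assumes assoc: "\<And>x y z. mul (mul x y) z = mul x (mul y z)"
    and "lpath mul gen a w b"
  shows "lpath mul gen (mul c a) w (mul c b)"
  using assms(2)
proof (induction w arbitrary: a)
  case Nil
  then show ?case by simp
next
  case (Cons l w)
  show ?case
  proof (cases l)
    case (Pos x)
    then show ?thesis using Cons by (simp add: assoc)
  next
    case (Neg x)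
    then obtain d where "mul d (gen x) = a" "lpath mul gen d w b"
      using Cons.prems by auto
    then show ?thesis using Cons.IH Neg by (auto simp: assoc intro!: exI[of _ "mul c d"])
  qed
qed

lemma lpath_loop_at_every_vertex:
  assumes assoc: "\<And>x y z. mul (mul x y) z = mul x (mul y z)"
    and right_unit: "\<And>x. mul x e = x"
    and "lpath mul gen e w e"
  shows "lpath mul gen a w a"
  using lpath_mul_left[OF assoc assms(3), of a] by (simp add: right_unit)

lemma mult1_assoc: "mult1 (mult1 x y) z = mult1 x (mult1 y z)"
  by (cases x; cases y; cases z) (auto simp: mult.assoc)

lemma mult1_None_right: "mult1 x None = x"
  by (cases x) auto

theorem lemma4p4:
  shows "(\<forall>(\<sigma>::'x list \<Rightarrow> 'm::monoid_mult) w.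
            monoid_choice \<sigma> \<and> w \<in> loop_problem_monoid \<sigma> \<longrightarrow>
            (\<forall>a. lpath (*) (\<lambda>x. \<sigma> [x]) a w a))
       \<and> (\<forall>(\<sigma>::'y list \<Rightarrow> 's::semigroup_mult) w.
            semigroup_choice \<sigma> \<and> w \<in> loop_problem_semigroup \<sigma> \<longrightarrow>
            (\<forall>a. lpath mult1 (\<lambda>x. sigma1 \<sigma> [x]) a w a))"
proof (intro conjI allI impI)
  fix \<sigma> :: "'x list \<Rightarrow> 'm" and w a
  assume "monoid_choice \<sigma> \<and> w \<in> loop_problem_monoid \<sigma>"
  then have "lpath (*) (\<lambda>x. \<sigma> [x]) 1 w 1"
    by (simp add: loop_problem_monoid_def loop_problem_def)
  then show "lpath (*) (\<lambda>x. \<sigma> [x]) a w a"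
    by (rule lpath_loop_at_every_vertex[OF mult.assoc mult_1_right])
next
  fix \<sigma> :: "'y list \<Rightarrow> 's" and w a
  assume "semigroup_choice \<sigma> \<and> w \<in> loop_problem_semigroup \<sigma>"
  then have "lpath mult1 (\<lambda>x. sigma1 \<sigma> [x]) None w None"
    by (simp add: loop_problem_semigroup_def loop_problem_def)
  then show "lpath mult1 (\<lambda>x. sigma1 \<sigma> [x]) a w a"
    by (rule lpath_loop_at_every_vertex[OF mult1_assoc mult1_None_right])
qed

end
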